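(* Let $f\colon X\to Y$ be a perfect surjective map between regular spaces $X$ and $Y$. If $X$ is very I-favorable, then $Y$ is very I-favorable.
   Context: For a family $\mathcal P$ of open subsets of $X$ contained in a family $\mathcal Q$ of open subsets of $X$, write $\mathcal P\subset_!\mathcal Q$ if for every subfamily $\mathcal S\subset\mathcal P$ and every point $x\notin\operatorname{cl}_X\bigcup\mathcal S$ there exists $W\in\mathcal P$ with $x\in W$ and $W\cap\bigcup\mathcal S=\emptyset$. $[\mathcal Q]^{\le\omega}$ denotes the set of countable subfamilies of $\mathcal Q$. A family $\mathcal C\subset[\mathcal Q]^{\le\omega}$ is a club if (i) for every increasing sequence $C_1\subset C_2\subset\cdots$ in $\mathcal C$, $\bigcup_nC_n\in\mathcal C$, and (ii) every $B\in[\mathcal Q]^{\le\omega}$ is contained in some $C\in\mathcal C$. A space $X$ with topology $\mathcal T_X$ is very I-favorable if $\{\mathcal P\in[\mathcal T_X]^{\le\omega}:\mathcal P\subset_!\mathcal T_X\}$ contains a club. A perfect map is a continuous closed map whose fibers are compact. *)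

theory Defs
  imports "HOL-Analysis.Analysis"
begin

definition opens :: "'a topology \<Rightarrow> 'a set set" where
  "opens X = {U. openin X U}"

definition sub_bang :: "'a topology \<Rightarrow> 'a set set \<Rightarrow> 'a set set \<Rightarrow> bool" where
  "sub_bang X P Q \<longleftrightarrow> P \<subseteq> Q \<and> Q \<subseteq> opens X \<and>
     (\<forall>S \<subseteq> P. \<forall>x \<in> topspace X. x \<notin> X closure_of (\<Union>S) \<longrightarrow>
        (\<exists>W \<in> P. x \<in> W \<and> W \<inter> \<Union>S = {}))"

definition countable_subfams :: "'b set \<Rightarrow> 'b set set" where
  "countable_subfams Q = {P. P \<subseteq> Q \<and> countable P}"

definition is_club :: "'b set \<Rightarrow> 'b set set \<Rightarrow> bool" where
  "is_club Q C \<longleftrightarrow> C \<subseteq> countable_subfams Q \<and>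
     (\<forall>Cs :: nat \<Rightarrow> 'b set. (\<forall>n. Cs n \<in> C) \<and> (\<forall>n. Cs n \<subseteq> Cs (Suc n)) \<longrightarrow> (\<Union>n. Cs n) \<in> C) \<and>
     (\<forall>B \<in> countable_subfams Q. \<exists>D \<in> C. B \<subseteq> D)"

definition very_I_favorable :: "'a topology \<Rightarrow> bool" where
  "very_I_favorable X \<longleftrightarrow>
     (\<exists>C. is_club (opens X) C \<and> C \<subseteq> {P \<in> countable_subfams (opens X). sub_bang X P (opens X)})"

end

theory Submission
  imports Defs
begin

(* The proof is the classical closing-off argument.  A club C on a set A is
   always generated by a single finitary operation D: a countable P \<subseteq> A
   that is closed under D (every finite list from P yields D xs \<subseteq> P) lies
   in C.  Applying this to the club witnessing very I-favorability of X, we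
   attach to every countable family Q of open subsets of Y the D-closure P(Q)
   of the preimages of Q in X, and call Q closed if it contains the "small
   image" {y. f\<^sup>-\<^sup>1 y \<subseteq> U} of every finite union U of members of P(Q).

   T\<^sub>X \<Longrightarrow> Q \<subset>\<^sub>! T\<^sub>Y.
   The main theorem combines these. *)

lemma finite_subset_incseq_Union:
  assumes "incseq A" "finite F" "F \<subseteq> (\<Union>n. A n)"
  obtains n where "F \<subseteq> A n"
  using assms(2,3)
proof (induction F arbitrary: thesis rule: finite_induct)
  case empty
  then show ?case by blast
next
  case (insert x F)
  obtain n where "F \<subseteq> A n" using insert by blast
  moreover obtain m where "x \<in> A m" using insert.prems(2) by blast
  ultimately have "insert x F \<subseteq> A (max n m)"
    using incseqD[OF assms(1), of n "max n m"] incseqD[OF assms(1), of m "max n m"] by auto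
  then show ?case by (rule insert.prems(1))
qed

(* An operator on families of sets commutes (up to inclusion) with unions of
   increasing sequences; together with monotonicity this makes it finitary. *)
definition chain_continuous :: "('a set \<Rightarrow> 'b set) \<Rightarrow> bool" where
  "chain_continuous \<Phi> \<longleftrightarrow> (\<forall>Qs. incseq Qs \<longrightarrow> \<Phi> (\<Union>n. Qs n) \<subseteq> (\<Union>n. \<Phi> (Qs n)))"

lemma chain_continuousD:
  "chain_continuous \<Phi> \<Longrightarrow> incseq Qs \<Longrightarrow> \<Phi> (\<Union>n. Qs n) \<subseteq> (\<Union>n. \<Phi> (Qs n))"
  unfolding chain_continuous_def by blast

lemma chain_continuous_comp:
  fixes \<Phi> :: "'b set \<Rightarrow> 'c set" and \<Psi> :: "'a set \<Rightarrow> 'b set"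
  assumes "mono \<Phi>" "chain_continuous \<Phi>" "mono \<Psi>" "chain_continuous \<Psi>"
  shows "chain_continuous (\<Phi> \<circ> \<Psi>)"
  unfolding chain_continuous_def
proof (intro allI impI)
  fix Qs :: "nat \<Rightarrow> 'a set" assume inc: "incseq Qs"
  have "(\<Phi> \<circ> \<Psi>) (\<Union>n. Qs n) \<subseteq> \<Phi> (\<Union>n. \<Psi> (Qs n))"
    using monoD[OF assms(1) chain_continuousD[OF assms(4) inc]] by simp
  also have "\<dots> \<subseteq> (\<Union>n. \<Phi> (\<Psi> (Qs n)))"
    using inc assms(3) by (intro chain_continuousD[OF assms(2)]) (simp add: incseq_def monoD)
  finally show "(\<Phi> \<circ> \<Psi>) (\<Union>n. Qs n) \<subseteq> (\<Union>n. (\<Phi> \<circ> \<Psi>) (Qs n))" by simp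
qed

definition omega_closure :: "('a set \<Rightarrow> 'a set) \<Rightarrow> 'a set \<Rightarrow> 'a set" where
  "omega_closure \<Phi> B = (\<Union>n. ((\<lambda>Q. Q \<union> \<Phi> Q) ^^ n) B)"

lemma omega_closure_stages_incseq: "incseq (\<lambda>n. ((\<lambda>Q. Q \<union> \<Phi> Q) ^^ n) B)"
  by (rule incseq_SucI) auto

lemma omega_closure_base: "B \<subseteq> omega_closure \<Phi> B"
  unfolding omega_closure_def
  using UN_upper[of 0 UNIV "\<lambda>n. ((\<lambda>Q. Q \<union> \<Phi> Q) ^^ n) B"] by simp

lemma omega_closure_closed:
  assumes "chain_continuous \<Phi>"
  shows "\<Phi> (omega_closure \<Phi> B) \<subseteq> omega_closure \<Phi> B"
proof -
  have "\<Phi> (omega_closure \<Phi> B) \<subseteq> (\<Union>n. \<Phi> (((\<lambda>Q. Q \<union> \<Phi> Q) ^^ n) B))"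
    unfolding omega_closure_def
    by (rule chain_continuousD[OF assms omega_closure_stages_incseq])
  also have "\<dots> \<subseteq> (\<Union>n. ((\<lambda>Q. Q \<union> \<Phi> Q) ^^ Suc n) B)"
    by auto
  also have "\<dots> \<subseteq> omega_closure \<Phi> B"
    unfolding omega_closure_def by blast
  finally show ?thesis .
qed

lemma omega_closure_least:
  assumes "mono \<Phi>" "B \<subseteq> P" "\<Phi> P \<subseteq> P"
  shows "omega_closure \<Phi> B \<subseteq> P"
proof -
  have "((\<lambda>Q. Q \<union> \<Phi> Q) ^^ n) B \<subseteq> P" for n
  proof (induction n)
    case 0
    then show ?case using assms(2) by simp
  next
    case (Suc n)
    then show ?case using monoD[OF assms(1) Suc.IH] assms(3) by auto
  qed
  then show ?thesis unfolding omega_closure_def by blast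
qed

lemma omega_closure_mono:
  assumes "mono \<Phi>" shows "mono (omega_closure \<Phi>)"
proof (rule monoI)
  fix B B' :: "'a set" assume "B \<subseteq> B'"
  have "((\<lambda>Q. Q \<union> \<Phi> Q) ^^ n) B \<subseteq> ((\<lambda>Q. Q \<union> \<Phi> Q) ^^ n) B'" for n
  proof (induction n)
    case (Suc n)
    then show ?case using monoD[OF assms Suc.IH] by auto
  qed (use \<open>B \<subseteq> B'\<close> in simp)
  then show "omega_closure \<Phi> B \<subseteq> omega_closure \<Phi> B'"
    unfolding omega_closure_def by blast
qed

lemma omega_closure_chain_continuous:
  fixes \<Phi> :: "'a set \<Rightarrow> 'a set"
  assumes "mono \<Phi>" "chain_continuous \<Phi>"
  shows "chain_continuous (omega_closure \<Phi>)"
  unfolding chain_continuous_def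
proof (intro allI impI)
  fix Bs :: "nat \<Rightarrow> 'a set" assume inc: "incseq Bs"
  have inc_cl: "incseq (\<lambda>n. omega_closure \<Phi> (Bs n))"
    using monoD[OF omega_closure_mono[OF assms(1)] incseqD[OF inc]] by (intro incseq_SucI) simp
  have "\<Phi> (\<Union>n. omega_closure \<Phi> (Bs n)) \<subseteq> (\<Union>n. \<Phi> (omega_closure \<Phi> (Bs n)))"
    by (rule chain_continuousD[OF assms(2) inc_cl])
  also have "\<dots> \<subseteq> (\<Union>n. omega_closure \<Phi> (Bs n))"
    by (rule UN_mono[OF order_refl omega_closure_closed[OF assms(2)]])
  finally have "\<Phi> (\<Union>n. omega_closure \<Phi> (Bs n)) \<subseteq> (\<Union>n. omega_closure \<Phi> (Bs n))" .
  moreover have "(\<Union>n. Bs n) \<subseteq> (\<Union>n. omega_closure \<Phi> (Bs n))"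
    by (rule UN_mono[OF order_refl omega_closure_base])
  ultimately show "omega_closure \<Phi> (\<Union>n. Bs n) \<subseteq> (\<Union>n. omega_closure \<Phi> (Bs n))"
    by (rule omega_closure_least[OF assms(1), rotated])
qed

lemma omega_closure_countable_subfams:
  assumes "B \<in> countable_subfams A"
    and into: "\<And>Q. Q \<in> countable_subfams A \<Longrightarrow> \<Phi> Q \<in> countable_subfams A"
  shows "omega_closure \<Phi> B \<in> countable_subfams A"
proof -
  have stage: "((\<lambda>Q. Q \<union> \<Phi> Q) ^^ n) B \<in> countable_subfams A" for n
  proof (induction n)
    case 0
    then show ?case using assms(1) by simp
  next
    case (Suc n)
    have "\<Phi> (((\<lambda>Q. Q \<union> \<Phi> Q) ^^ n) B) \<in> countable_subfams A"
      by (rule into[OF Suc.IH])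
    with Suc.IH show ?case by (simp add: countable_subfams_def)
  qed
  have "countable (omega_closure \<Phi> B)"
    unfolding omega_closure_def using stage by (simp add: countable_subfams_def)
  moreover have "omega_closure \<Phi> B \<subseteq> A"
    unfolding omega_closure_def using stage by (auto simp: countable_subfams_def)
  ultimately show ?thesis by (simp add: countable_subfams_def)
qed

lemma club_of_closed_families:
  fixes A :: "'a set"
  assumes "mono \<Phi>" "chain_continuous \<Phi>"
    and into: "\<And>Q. Q \<in> countable_subfams A \<Longrightarrow> \<Phi> Q \<in> countable_subfams A"
  shows "is_club A {Q \<in> countable_subfams A. \<Phi> Q \<subseteq> Q}"
  unfolding is_club_def
proof (intro conjI allI impI ballI)
  fix Cs :: "nat \<Rightarrow> 'a set"
  assume "(\<forall>n. Cs n \<in> {Q \<in> countable_subfams A. \<Phi> Q \<subseteq> Q}) \<and> (\<forall>n. Cs n \<subseteq> Cs (Suc n))"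
  then have Cs: "\<And>n. countable (Cs n)" "\<And>n. Cs n \<subseteq> A" "\<And>n. \<Phi> (Cs n) \<subseteq> Cs n"
    and "incseq Cs"
    unfolding countable_subfams_def by (auto simp: incseq_Suc_iff)
  have "\<Phi> (\<Union>n. Cs n) \<subseteq> (\<Union>n. \<Phi> (Cs n))"
    by (rule chain_continuousD[OF assms(2) \<open>incseq Cs\<close>])
  also have "\<dots> \<subseteq> (\<Union>n. Cs n)"
    by (rule UN_mono[OF order_refl Cs(3)])
  finally show "(\<Union>n. Cs n) \<in> {Q \<in> countable_subfams A. \<Phi> Q \<subseteq> Q}"
    using Cs(1,2) by (auto simp: countable_subfams_def)
next
  fix B assume "B \<in> countable_subfams A"
  then have "omega_closure \<Phi> B \<in> countable_subfams A"
    by (rule omega_closure_countable_subfams[OF _ into])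
  moreover have "\<Phi> (omega_closure \<Phi> B) \<subseteq> omega_closure \<Phi> B"
    by (rule omega_closure_closed[OF assms(2)])
  moreover have "B \<subseteq> omega_closure \<Phi> B"
    by (rule omega_closure_base)
  ultimately show "\<exists>D\<in>{Q \<in> countable_subfams A. \<Phi> Q \<subseteq> Q}. B \<subseteq> D"
    by blast
qed simp

(* The results of a finitary operation D applied to all finite lists from P;
   P is closed under D iff lift_lists D P \<subseteq> P.  Since lists are finite, this
   operator is chain-continuous, and it preserves countability. *)
definition lift_lists :: "('a list \<Rightarrow> 'b set) \<Rightarrow> 'a set \<Rightarrow> 'b set" where
  "lift_lists D P = (\<Union>xs \<in> {xs. set xs \<subseteq> P}. D xs)"

lemma lift_lists_mono: "mono (lift_lists D)"
  unfolding lift_lists_def by (rule monoI) blast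

lemma lift_lists_chain_continuous:
  fixes D :: "'a list \<Rightarrow> 'b set"
  shows "chain_continuous (lift_lists D)"
  unfolding chain_continuous_def
proof (intro allI impI subsetI)
  fix Ps :: "nat \<Rightarrow> 'a set" and U assume inc: "incseq Ps" and "U \<in> lift_lists D (\<Union>n. Ps n)"
  then obtain xs where xs: "set xs \<subseteq> (\<Union>n. Ps n)" "U \<in> D xs"
    unfolding lift_lists_def by blast
  obtain n where "set xs \<subseteq> Ps n"
    using finite_subset_incseq_Union[OF inc finite_set xs(1)] by blast
  then show "U \<in> (\<Union>n. lift_lists D (Ps n))"
    using xs(2) unfolding lift_lists_def by blast
qed

lemma lift_lists_countable_subfams:
  assumes "countable P" "\<And>xs. set xs \<subseteq> P \<Longrightarrow> D xs \<in> countable_subfams A"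
  shows "lift_lists D P \<in> countable_subfams A"
proof -
  have D: "countable (D xs)" "D xs \<subseteq> A" if "set xs \<subseteq> P" for xs
    using assms(2)[OF that] by (simp_all add: countable_subfams_def)
  have "countable {xs. set xs \<subseteq> P}"
    using countable_lists[OF assms(1)] by (simp add: lists_eq_set)
  then have "countable (lift_lists D P)"
    unfolding lift_lists_def using D(1) by (intro countable_UN) auto
  moreover have "lift_lists D P \<subseteq> A"
    unfolding lift_lists_def using D(2) by (intro UN_least) auto
  ultimately show ?thesis by (simp add: countable_subfams_def)
qed

lemma is_clubD:
  assumes "is_club A C"
  shows is_club_subfams: "C \<subseteq> countable_subfams A"
    and is_club_chain: "\<And>Cs. (\<forall>n. Cs n \<in> C) \<Longrightarrow> (\<forall>n. Cs n \<subseteq> Cs (Suc n)) \<Longrightarrow> (\<Union>n. Cs n) \<in> C"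
    and is_club_unbounded: "\<And>B. B \<in> countable_subfams A \<Longrightarrow> \<exists>E\<in>C. B \<subseteq> E"
  using assms unfolding is_club_def by simp_all

lemma club_nonempty:
  assumes "is_club A C" shows "\<exists>E. E \<in> C"
  using is_club_unbounded[OF assms, of "{}"] by (auto simp: countable_subfams_def)

lemma club_extend:
  assumes club: "is_club A C" and "E \<in> C" "B \<in> countable_subfams A"
  shows "\<exists>E'. E' \<in> C \<and> E \<union> B \<subseteq> E'"
proof -
  have "E \<in> countable_subfams A" using is_club_subfams[OF club] \<open>E \<in> C\<close> by (rule subsetD)
  then have "E \<union> B \<in> countable_subfams A"
    using \<open>B \<in> countable_subfams A\<close> by (simp add: countable_subfams_def)
  then show ?thesis using is_club_unbounded[OF club] by blast
qed

(* A single finitary operation generating the club C: along a list it picks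
   members of C that grow and absorb the list's elements. *)
primrec club_choice :: "'a set \<Rightarrow> 'a set set \<Rightarrow> 'a list \<Rightarrow> 'a set" where
  "club_choice A C [] = (SOME E. E \<in> C)"
| "club_choice A C (x # xs) = (SOME E. E \<in> C \<and> club_choice A C xs \<union> ({x} \<inter> A) \<subseteq> E)"

(* Each choice is well defined because the club is nonempty and unbounded. *)
lemma club_choice_Cons:
  assumes "is_club A C" "club_choice A C xs \<in> C"
  shows "club_choice A C (x # xs) \<in> C \<and> club_choice A C xs \<union> ({x} \<inter> A) \<subseteq> club_choice A C (x # xs)"
proof -
  have "\<exists>E. E \<in> C \<and> club_choice A C xs \<union> ({x} \<inter> A) \<subseteq> E"
    by (rule club_extend[OF assms]) (simp add: countable_subfams_def)
  from someI_ex[OF this] show ?thesis by simp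
qed

lemma club_choice_in:
  assumes "is_club A C"
  shows "club_choice A C xs \<in> C"
proof (induction xs)
  case Nil
  from someI_ex[OF club_nonempty[OF assms]] show ?case by simp
next
  case (Cons x xs)
  then show ?case using club_choice_Cons[OF assms] by blast
qed

lemma club_choice_grows:
  assumes "is_club A C"
  shows "club_choice A C xs \<union> ({x} \<inter> A) \<subseteq> club_choice A C (x # xs)"
  using club_choice_Cons[OF assms club_choice_in[OF assms]] by blast

(* Every countable P \<subseteq> A closed under club_choice belongs to C: enumerating P
   as b 0, b 1, ..., the choices along [b n, ..., b 0] form an increasing
   sequence in C whose union is exactly P. *)
lemma club_contains_choice_closed:
  assumes club: "is_club A C" and P: "P \<in> countable_subfams A"
    and closed: "lift_lists (club_choice A C) P \<subseteq> P"
  shows "P \<in> C"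
proof -
  have closed': "club_choice A C xs \<subseteq> P" if "set xs \<subseteq> P" for xs
    using closed that unfolding lift_lists_def by blast
  show ?thesis
  proof (cases "P = {}")
    case True
    then show ?thesis using closed'[of "[]"] club_choice_in[OF club, of "[]"] by simp
  next
    case False
    have "countable P" "P \<subseteq> A" using P by (auto simp: countable_subfams_def)
    define b where "b = from_nat_into P"
    have range_b: "range b = P" using False \<open>countable P\<close> b_def by simp
    then have b_in_A: "b n \<in> A" for n using \<open>P \<subseteq> A\<close> by blast
    define Cs where "Cs n = club_choice A C (map b (rev [0..<Suc n]))" for n
    have Cs_Suc: "Cs (Suc n) = club_choice A C (b (Suc n) # map b (rev [0..<Suc n]))" for n
      by (simp add: Cs_def)
    have Cs_grows: "Cs n \<union> {b (Suc n)} \<subseteq> Cs (Suc n)" for n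
    proof -
      have "Cs n \<union> ({b (Suc n)} \<inter> A) \<subseteq> Cs (Suc n)"
        unfolding Cs_Suc Cs_def[of n] by (rule club_choice_grows[OF club])
      then show ?thesis using b_in_A[of "Suc n"] by blast
    qed
    have b_in_Cs: "b n \<in> Cs n" for n
    proof (cases n)
      case 0
      then show ?thesis
        using club_choice_grows[OF club, of "[]" "b 0"] b_in_A by (simp add: Cs_def)
    next
      case (Suc m)
      then show ?thesis using Cs_grows[of m] by blast
    qed
    have "(\<Union>n. Cs n) \<in> C"
      using Cs_grows club_choice_in[OF club] unfolding Cs_def
      by (intro is_club_chain[OF club] allI) blast+
    moreover have "(\<Union>n. Cs n) = P"
    proof
      show "(\<Union>n. Cs n) \<subseteq> P"
        unfolding Cs_def using range_b by (intro UN_least closed') auto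
      show "P \<subseteq> (\<Union>n. Cs n)" using b_in_Cs range_b by blast
    qed
    ultimately show ?thesis by simp
  qed
qed

definition preimages :: "'a topology \<Rightarrow> ('a \<Rightarrow> 'b) \<Rightarrow> 'b set set \<Rightarrow> 'a set set" where
  "preimages X f Q = (\<lambda>V. {x \<in> topspace X. f x \<in> V}) ` Q"

lemma preimages_mono: "mono (preimages X f)"
  unfolding preimages_def by (rule monoI) blast

lemma preimages_chain_continuous: "chain_continuous (preimages X f)"
  unfolding chain_continuous_def preimages_def by blast

lemma Union_preimages: "\<Union>(preimages X f S) = {x \<in> topspace X. f x \<in> \<Union>S}"
  unfolding preimages_def by blast

lemma preimages_countable_subfams:
  assumes "continuous_map X Y f" "Q \<in> countable_subfams (opens Y)"
  shows "preimages X f Q \<in> countable_subfams (opens X)"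
  using assms openin_continuous_map_preimage[OF assms(1)]
  unfolding preimages_def countable_subfams_def opens_def by blast

definition small_image :: "'a topology \<Rightarrow> 'b topology \<Rightarrow> ('a \<Rightarrow> 'b) \<Rightarrow> 'a set \<Rightarrow> 'b set" where
  "small_image X Y f U = {y \<in> topspace Y. {x \<in> topspace X. f x = y} \<subseteq> U}"

lemma openin_small_image:
  assumes "closed_map X Y f" "openin X U"
  shows "openin Y (small_image X Y f U)"
proof -
  have "closedin Y (f ` (topspace X - U))"
    using assms unfolding closed_map_def by blast
  moreover have "small_image X Y f U = topspace Y - f ` (topspace X - U)"
    unfolding small_image_def by blast
  ultimately show ?thesis by auto
qed

lemma sub_bangD:
  assumes "sub_bang X P Q"
  shows sub_bang_opens: "P \<subseteq> opens X"
    and sub_bang_separates: "\<And>S x. S \<subseteq> P \<Longrightarrow> x \<in> topspace X \<Longrightarrow> x \<notin> X closure_of \<Union>S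
        \<Longrightarrow> \<exists>W\<in>P. x \<in> W \<and> W \<inter> \<Union>S = {}"
  using assms unfolding sub_bang_def by auto

lemma sub_bang_compact_separation:
  assumes sb: "sub_bang X P Q" and "S \<subseteq> P" "compactin X K" "K \<inter> X closure_of \<Union>S = {}"
  obtains F where "finite F" "F \<subseteq> P" "K \<subseteq> \<Union>F" "\<Union>F \<inter> \<Union>S = {}"
proof -
  define UU where "UU = {W \<in> P. W \<inter> \<Union>S = {}}"
  have "\<forall>W\<in>UU. openin X W"
    using sub_bang_opens[OF sb] unfolding UU_def opens_def by auto
  moreover have "K \<subseteq> \<Union>UU"
  proof
    fix x assume "x \<in> K"
    then have "x \<in> topspace X" "x \<notin> X closure_of \<Union>S"
      using compactin_subset_topspace[OF assms(3)] assms(4) by auto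
    then obtain W where "W \<in> P" "x \<in> W" "W \<inter> \<Union>S = {}"
      using sub_bang_separates[OF sb \<open>S \<subseteq> P\<close>] by blast
    then show "x \<in> \<Union>UU" unfolding UU_def by blast
  qed
  ultimately obtain F where F: "finite F" "F \<subseteq> UU" "K \<subseteq> \<Union>F"
    using assms(3) unfolding compactin_def by blast
  have "F \<subseteq> P" and "\<Union>F \<inter> \<Union>S = {}"
    using F(2) unfolding UU_def by auto
  then show ?thesis by (rule that[OF F(1) _ F(3)])
qed

(* To separate y from \<Union>S, compactness of the fibre of y gives finitely many
   members of P covering it and missing the preimage of \<Union>S; the small image
   of their union is the required member of Q. *)
lemma sub_bang_perfect_image:
  assumes perfect: "perfect_map X Y f" and Q: "Q \<subseteq> opens Y"
    and sb: "sub_bang X P (opens X)" and pre: "preimages X f Q \<subseteq> P"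
    and small: "\<And>Us. set Us \<subseteq> P \<Longrightarrow> small_image X Y f (\<Union>(set Us)) \<in> Q"
  shows "sub_bang Y Q (opens Y)"
  unfolding sub_bang_def
proof (intro conjI subset_refl Q allI impI ballI)
  fix S y assume S: "S \<subseteq> Q" and y: "y \<in> topspace Y" "y \<notin> Y closure_of \<Union>S"
  define K where "K = {x \<in> topspace X. f x = y}"
  have "preimages X f S \<subseteq> P"
    using pre S unfolding preimages_def by blast
  moreover have "compactin X K"
    using perfect_imp_proper_map[OF perfect] y(1) unfolding proper_map_def K_def by blast
  moreover have "K \<inter> X closure_of \<Union>(preimages X f S) = {}"
    using continuous_map_closure_preimage_subset[OF perfect_imp_continuous_map[OF perfect]] y(2)
    unfolding Union_preimages K_def by blast
  ultimately obtain F where F: "finite F" "F \<subseteq> P" "K \<subseteq> \<Union>F"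
      and disjoint: "\<Union>F \<inter> \<Union>(preimages X f S) = {}"
    by (rule sub_bang_compact_separation[OF sb])
  obtain Us where "set Us = F" using finite_list[OF F(1)] by blast
  then have "small_image X Y f (\<Union>F) \<in> Q" using small F(2) by blast
  moreover have "y \<in> small_image X Y f (\<Union>F)"
    using y(1) F(3) unfolding small_image_def K_def by blast
  moreover have "small_image X Y f (\<Union>F) \<inter> \<Union>S = {}"
  proof (rule equals0I)
    fix z assume z: "z \<in> small_image X Y f (\<Union>F) \<inter> \<Union>S"
    then have "z \<in> f ` topspace X"
      using perfect_imp_surjective_map[OF perfect] by (simp add: small_image_def)
    then obtain x where x: "x \<in> topspace X" "f x = z" by blast
    then have "x \<in> \<Union>F" using z unfolding small_image_def by blast
    moreover have "x \<in> \<Union>(preimages X f S)" using x z unfolding Union_preimages by blast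
    ultimately show False using disjoint by blast
  qed
  ultimately show "\<exists>W\<in>Q. y \<in> W \<and> W \<inter> \<Union>S = {}" by blast
qed

definition saturation ::
    "'a topology \<Rightarrow> ('a \<Rightarrow> 'b) \<Rightarrow> ('a set list \<Rightarrow> 'a set set) \<Rightarrow> 'b set set \<Rightarrow> 'a set set" where
  "saturation X f D Q = omega_closure (lift_lists D) (preimages X f Q)"

definition small_image_family ::
    "'a topology \<Rightarrow> 'b topology \<Rightarrow> ('a \<Rightarrow> 'b) \<Rightarrow> ('a set list \<Rightarrow> 'a set set) \<Rightarrow> 'b set set \<Rightarrow> 'b set set" where
  "small_image_family X Y f D Q =
     lift_lists (\<lambda>Us. {small_image X Y f (\<Union>(set Us))}) (saturation X f D Q)"

lemma saturation_mono:
  fixes X :: "'a topology" and f :: "'a \<Rightarrow> 'b"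
  shows "mono (saturation X f D)"
proof (rule monoI)
  fix Q Q' :: "'b set set" assume "Q \<subseteq> Q'"
  then have "preimages X f Q \<subseteq> preimages X f Q'"
    by (rule monoD[OF preimages_mono])
  then show "saturation X f D Q \<subseteq> saturation X f D Q'"
    unfolding saturation_def by (rule monoD[OF omega_closure_mono[OF lift_lists_mono]])
qed

lemma saturation_chain_continuous: "chain_continuous (saturation X f D)"
proof -
  have "saturation X f D = omega_closure (lift_lists D) \<circ> preimages X f"
    by (rule ext) (simp add: saturation_def)
  then show ?thesis
    using chain_continuous_comp[OF omega_closure_mono[OF lift_lists_mono]
        omega_closure_chain_continuous[OF lift_lists_mono lift_lists_chain_continuous]
        preimages_mono preimages_chain_continuous]
    by (simp only:)
qed

lemma saturation_countable_subfams:
  assumes "continuous_map X Y f" "\<And>Us. D Us \<in> countable_subfams (opens X)"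
    and "Q \<in> countable_subfams (opens Y)"
  shows "saturation X f D Q \<in> countable_subfams (opens X)"
  unfolding saturation_def
proof (rule omega_closure_countable_subfams)
  show "preimages X f Q \<in> countable_subfams (opens X)"
    by (rule preimages_countable_subfams[OF assms(1,3)])
  show "lift_lists D P \<in> countable_subfams (opens X)" if "P \<in> countable_subfams (opens X)" for P
  proof (rule lift_lists_countable_subfams)
    show "countable P" using that by (simp add: countable_subfams_def)
  qed (rule assms(2))
qed

lemma saturation_closed: "lift_lists D (saturation X f D Q) \<subseteq> saturation X f D Q"
  unfolding saturation_def by (rule omega_closure_closed[OF lift_lists_chain_continuous])

lemma club_of_small_image_closed:
  fixes X :: "'a topology" and Y :: "'b topology" and f :: "'a \<Rightarrow> 'b"
  assumes perfect: "perfect_map X Y f" and D: "\<And>Us. D Us \<in> countable_subfams (opens X)"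
  shows "is_club (opens Y) {Q \<in> countable_subfams (opens Y). small_image_family X Y f D Q \<subseteq> Q}"
proof (rule club_of_closed_families)
  show "mono (small_image_family X Y f D)"
  proof (rule monoI)
    fix Q Q' :: "'b set set" assume "Q \<subseteq> Q'"
    then have "saturation X f D Q \<subseteq> saturation X f D Q'"
      by (rule monoD[OF saturation_mono])
    then show "small_image_family X Y f D Q \<subseteq> small_image_family X Y f D Q'"
      unfolding small_image_family_def by (rule monoD[OF lift_lists_mono])
  qed
  have "small_image_family X Y f D
      = lift_lists (\<lambda>Us. {small_image X Y f (\<Union>(set Us))}) \<circ> saturation X f D"
    by (rule ext) (simp add: small_image_family_def)
  then show "chain_continuous (small_image_family X Y f D)"
    using chain_continuous_comp[OF lift_lists_mono lift_lists_chain_continuous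
        saturation_mono saturation_chain_continuous] by (simp only:)
next
  fix Q assume "Q \<in> countable_subfams (opens Y)"
  then have P: "saturation X f D Q \<in> countable_subfams (opens X)"
    by (rule saturation_countable_subfams[OF perfect_imp_continuous_map[OF perfect] D])
  show "small_image_family X Y f D Q \<in> countable_subfams (opens Y)"
    unfolding small_image_family_def
  proof (rule lift_lists_countable_subfams)
    show "countable (saturation X f D Q)" using P by (simp add: countable_subfams_def)
    fix Us assume "set Us \<subseteq> saturation X f D Q"
    then have "openin X (\<Union>(set Us))"
      using P by (intro openin_Union) (auto simp: countable_subfams_def opens_def)
    then have "openin Y (small_image X Y f (\<Union>(set Us)))"
      by (rule openin_small_image[OF perfect_imp_closed_map[OF perfect]])
    then show "{small_image X Y f (\<Union>(set Us))} \<in> countable_subfams (opens Y)"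
      by (simp add: countable_subfams_def opens_def)
  qed
qed

lemma sub_bang_of_small_image_closed:
  assumes perfect: "perfect_map X Y f" and "Q \<in> countable_subfams (opens Y)"
    and closed: "small_image_family X Y f D Q \<subseteq> Q"
    and sb: "sub_bang X (saturation X f D Q) (opens X)"
  shows "sub_bang Y Q (opens Y)"
proof (rule sub_bang_perfect_image[OF perfect _ sb])
  show "Q \<subseteq> opens Y" using assms(2) by (simp add: countable_subfams_def)
  show "preimages X f Q \<subseteq> saturation X f D Q"
    unfolding saturation_def by (rule omega_closure_base)
  show "small_image X Y f (\<Union>(set Us)) \<in> Q" if "set Us \<subseteq> saturation X f D Q" for Us
  proof (rule subsetD[OF closed])
    show "small_image X Y f (\<Union>(set Us)) \<in> small_image_family X Y f D Q"
      unfolding small_image_family_def lift_lists_def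
      by (rule UN_I[of Us]) (simp_all add: that)
  qed
qed

theorem theorem3p4:
  fixes X :: "'a topology" and Y :: "'b topology" and f :: "'a \<Rightarrow> 'b"
  assumes "regular_space X" and "t1_space X"
    and "regular_space Y" and "t1_space Y"
    and "perfect_map X Y f"
    and "very_I_favorable X"
  shows "very_I_favorable Y"
proof -
  obtain C where club: "is_club (opens X) C"
    and sb: "C \<subseteq> {P \<in> countable_subfams (opens X). sub_bang X P (opens X)}"
    using assms(6) unfolding very_I_favorable_def by blast
  define D where "D = club_choice (opens X) C"
  have D: "D Us \<in> countable_subfams (opens X)" for Us
    unfolding D_def by (rule subsetD[OF is_club_subfams[OF club] club_choice_in[OF club]])
  define CY where "CY = {Q \<in> countable_subfams (opens Y). small_image_family X Y f D Q \<subseteq> Q}"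
  have "is_club (opens Y) CY"
    unfolding CY_def by (rule club_of_small_image_closed[OF assms(5) D])
  moreover have "sub_bang Y Q (opens Y)" if Q: "Q \<in> CY" for Q
  proof -
    have Q_cs: "Q \<in> countable_subfams (opens Y)" using Q by (simp add: CY_def)
    have "saturation X f D Q \<in> countable_subfams (opens X)"
      by (rule saturation_countable_subfams[OF perfect_imp_continuous_map[OF assms(5)] D Q_cs])
    moreover have "lift_lists (club_choice (opens X) C) (saturation X f D Q) \<subseteq> saturation X f D Q"
      using saturation_closed[of D X f Q] unfolding D_def .
    ultimately have "saturation X f D Q \<in> C"
      by (rule club_contains_choice_closed[OF club])
    then show ?thesis
      using sub_bang_of_small_image_closed[OF assms(5) Q_cs] sb Q by (auto simp: CY_def)
  qed
  ultimately show ?thesis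
    unfolding very_I_favorable_def CY_def by blast
qed

end
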